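(* Let $\mathbb{F}_{q^m}$ be a field extension of $\mathbb{F}=\mathbb{F}_q$ and let $G_i\in\mathbb{F}_{q^m}^{a_i\times n_i}$, $i=1,2$, be matrices of full row rank. Set $G=\begin{pmatrix}G_1&0\\0&G_2\end{pmatrix}\in\mathbb{F}_{q^m}^{(a_1+a_2)\times(n_1+n_2)}$. Let $\mathcal{M}_i=(\mathbb{F}^{n_i},\rho_i)$ and $\mathcal{N}=(\mathbb{F}^{n_1+n_2},\hat\rho)$ be the $q$-matroids represented by $G_1,G_2$ and $G$. Identify $\mathbb{F}^{n_1+n_2}=\mathbb{F}^{n_1}\oplus\mathbb{F}^{n_2}$ in the natural way. (a) If $F=F_1\oplus F_2$ with $F_i$ a flat of $\mathcal{M}_i$, then $F$ is a flat of $\mathcal{N}$. (b) If $O=O_1\oplus O_2$ with $O_i$ an open space of $\mathcal{M}_i$, then $O$ is an open space of $\mathcal{N}$. As a consequence, $\mathcal{Z}(\mathcal{M}_1\oplus\mathcal{M}_2)\subseteq\mathcal{Z}(\mathcal{N})$, and every independent space of $\mathcal{N}$ is an independent space of $\mathcal{M}_1\oplus\mathcal{M}_2$.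
   Context: A $q$-matroid is $\mathcal{M}=(E,\rho)$, $E$ a finite-dimensional $\mathbb{F}_q$-vector space, $\rho$ from subspaces to $\mathbb{Z}_{\ge0}$ with $0\le\rho(V)\le\dim V$, monotone and submodular. For $G\in\mathbb{F}_{q^m}^{k\times n}$ of rank $k$, the $q$-matroid represented by $G$ is $(\mathbb{F}_q^n,\rho)$ with $\rho(V)=\mathrm{rk}(GY^{\mathsf T})$ where $Y$ is any matrix over $\mathbb{F}_q$ with row space $V$. Independent: $\rho(V)=\dim V$. Circuit: dependent subspace all of whose proper subspaces are independent; open: a sum of circuits (empty sum $=0$). Flat: $\rho(F+\langle x\rangle)>\rho(F)$ for all $x\notin F$. Cyclic core: $\mathrm{cyc}(V)=\{x\in V\mid\rho(W)=\rho(V)\text{ for all }W\le V\text{ with }W+\langle x\rangle=V\}$; cyclic: $\mathrm{cyc}(V)=V$ (equivalently, open). $\mathcal{Z}(\mathcal{M})$: set of cyclic flats. Direct sum: for $E=E_1\oplus E_2$ with projections $\pi_i$, $\mathcal{M}_1\oplus\mathcal{M}_2=(E,\rho)$ where $\rho(V)=\dim V+\min_{X\le V}(\rho_1(\pi_1(X))+\rho_2(\pi_2(X))-\dim X)$. *)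

theory Defs
  imports Main "HOL.Vector_Spaces" "HOL-Library.Function_Algebras"
begin

text \<open>Vectors of F^n are represented as functions nat => 'a vanishing from index n on.\<close>

definition fscale :: "'a::field \<Rightarrow> (nat \<Rightarrow> 'a) \<Rightarrow> (nat \<Rightarrow> 'a)" where
  "fscale c v = (\<lambda>i. c * v i)"

definition Fn :: "nat \<Rightarrow> (nat \<Rightarrow> 'a::field) set" where
  "Fn n = {v. \<forall>i\<ge>n. v i = 0}"

definition fspan :: "(nat \<Rightarrow> 'a::field) set \<Rightarrow> (nat \<Rightarrow> 'a) set" where
  "fspan S = module.span fscale S"

definition fdim :: "(nat \<Rightarrow> 'a::field) set \<Rightarrow> nat" where
  "fdim S = vector_space.dim fscale S"

definition subsp :: "nat \<Rightarrow> (nat \<Rightarrow> 'a::field) set \<Rightarrow> bool" where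
  "subsp n V \<longleftrightarrow> V \<subseteq> Fn n \<and> module.subspace fscale V"

definition qindep :: "nat \<Rightarrow> ((nat \<Rightarrow> 'a::field) set \<Rightarrow> nat) \<Rightarrow> (nat \<Rightarrow> 'a) set \<Rightarrow> bool" where
  "qindep n rho V \<longleftrightarrow> subsp n V \<and> rho V = fdim V"

definition qcircuit :: "nat \<Rightarrow> ((nat \<Rightarrow> 'a::field) set \<Rightarrow> nat) \<Rightarrow> (nat \<Rightarrow> 'a) set \<Rightarrow> bool" where
  "qcircuit n rho C \<longleftrightarrow> subsp n C \<and> \<not> qindep n rho C \<and>
     (\<forall>D. subsp n D \<and> D \<subset> C \<longrightarrow> qindep n rho D)"

text \<open>open space: a sum of circuits (empty sum = zero space)\<close>
definition qopen :: "nat \<Rightarrow> ((nat \<Rightarrow> 'a::field) set \<Rightarrow> nat) \<Rightarrow> (nat \<Rightarrow> 'a) set \<Rightarrow> bool" where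
  "qopen n rho U \<longleftrightarrow> (\<exists>S. (\<forall>C\<in>S. qcircuit n rho C) \<and> U = fspan (\<Union>S))"

definition qflat :: "nat \<Rightarrow> ((nat \<Rightarrow> 'a::field) set \<Rightarrow> nat) \<Rightarrow> (nat \<Rightarrow> 'a) set \<Rightarrow> bool" where
  "qflat n rho F \<longleftrightarrow> subsp n F \<and>
     (\<forall>x \<in> Fn n - F. rho (fspan (insert x F)) > rho F)"

definition qcyc :: "nat \<Rightarrow> ((nat \<Rightarrow> 'a::field) set \<Rightarrow> nat) \<Rightarrow> (nat \<Rightarrow> 'a) set \<Rightarrow> (nat \<Rightarrow> 'a) set" where
  "qcyc n rho V = {x \<in> V. \<forall>W. subsp n W \<and> W \<subseteq> V \<and> fspan (insert x W) = V \<longrightarrow> rho W = rho V}"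

definition qcyclic :: "nat \<Rightarrow> ((nat \<Rightarrow> 'a::field) set \<Rightarrow> nat) \<Rightarrow> (nat \<Rightarrow> 'a) set \<Rightarrow> bool" where
  "qcyclic n rho V \<longleftrightarrow> subsp n V \<and> qcyc n rho V = V"

definition cyclic_flats :: "nat \<Rightarrow> ((nat \<Rightarrow> 'a::field) set \<Rightarrow> nat) \<Rightarrow> (nat \<Rightarrow> 'a) set set" where
  "cyclic_flats n rho = {F. qflat n rho F \<and> qcyclic n rho F}"

definition proj1 :: "nat \<Rightarrow> (nat \<Rightarrow> 'a::zero) \<Rightarrow> (nat \<Rightarrow> 'a)" where
  "proj1 n1 v = (\<lambda>i. if i < n1 then v i else 0)"

definition proj2 :: "nat \<Rightarrow> nat \<Rightarrow> (nat \<Rightarrow> 'a::zero) \<Rightarrow> (nat \<Rightarrow> 'a)" where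
  "proj2 n1 n2 v = (\<lambda>i. if i < n2 then v (n1 + i) else 0)"

definition dsum_space :: "nat \<Rightarrow> nat \<Rightarrow> (nat \<Rightarrow> 'a::field) set \<Rightarrow> (nat \<Rightarrow> 'a) set \<Rightarrow> (nat \<Rightarrow> 'a) set" where
  "dsum_space n1 n2 V1 V2 = {v \<in> Fn (n1 + n2). proj1 n1 v \<in> V1 \<and> proj2 n1 n2 v \<in> V2}"

definition dsum_rank :: "nat \<Rightarrow> ((nat \<Rightarrow> 'a::field) set \<Rightarrow> nat) \<Rightarrow> nat \<Rightarrow> ((nat \<Rightarrow> 'a) set \<Rightarrow> nat)
    \<Rightarrow> (nat \<Rightarrow> 'a) set \<Rightarrow> nat" where
  "dsum_rank n1 rho1 n2 rho2 V = nat (int (fdim V) +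
     Min {int (rho1 (proj1 n1 ` X)) + int (rho2 (proj2 n1 n2 ` X)) - int (fdim X) | X.
            subsp (n1 + n2) X \<and> X \<subseteq> V})"

text \<open>emb : 'a => 'b is a field embedding making 'b an extension of 'a\<close>
definition field_emb :: "('a::field \<Rightarrow> 'b::field) \<Rightarrow> bool" where
  "field_emb emb \<longleftrightarrow> emb 1 = 1 \<and> (\<forall>x y. emb (x + y) = emb x + emb y) \<and>
     (\<forall>x y. emb (x * y) = emb x * emb y)"

text \<open>An a x n matrix over 'b is a function G :: nat => nat => 'b; only entries with
  i < a, j < n matter.\<close>
definition mat_col :: "nat \<Rightarrow> (nat \<Rightarrow> nat \<Rightarrow> 'b::field) \<Rightarrow> nat \<Rightarrow> (nat \<Rightarrow> 'b)" where
  "mat_col a G j = (\<lambda>i. if i < a then G i j else 0)"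

definition mat_rank :: "nat \<Rightarrow> nat \<Rightarrow> (nat \<Rightarrow> nat \<Rightarrow> 'b::field) \<Rightarrow> nat" where
  "mat_rank a n G = fdim (fspan (mat_col a G ` {..<n}))"

definition mat_app :: "('a::field \<Rightarrow> 'b::field) \<Rightarrow> nat \<Rightarrow> nat \<Rightarrow> (nat \<Rightarrow> nat \<Rightarrow> 'b) \<Rightarrow> (nat \<Rightarrow> 'a) \<Rightarrow> (nat \<Rightarrow> 'b)" where
  "mat_app emb a n G y = (\<lambda>i. if i < a then (\<Sum>j<n. G i j * emb (y j)) else 0)"

text \<open>rho(V) = rk(G Y^T), Y with row space V: the column space of G Y^T is the
  span over the extension field of {G y | y in V}.\<close>
definition rep_rank :: "('a::field \<Rightarrow> 'b::field) \<Rightarrow> nat \<Rightarrow> nat \<Rightarrow> (nat \<Rightarrow> nat \<Rightarrow> 'b)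
    \<Rightarrow> (nat \<Rightarrow> 'a) set \<Rightarrow> nat" where
  "rep_rank emb a n G V = fdim (fspan (mat_app emb a n G ` V))"

definition block_diag :: "nat \<Rightarrow> nat \<Rightarrow> (nat \<Rightarrow> nat \<Rightarrow> 'b::field) \<Rightarrow> (nat \<Rightarrow> nat \<Rightarrow> 'b)
    \<Rightarrow> (nat \<Rightarrow> nat \<Rightarrow> 'b)" where
  "block_diag a1 n1 G1 G2 = (\<lambda>i j. if i < a1 then (if j < n1 then G1 i j else 0)
                                   else (if j < n1 then 0 else G2 (i - a1) (j - n1)))"

end

theory Submission
  imports Defs
begin

(* The block diagonal matrix acts blockwise, G v = (G1 (pi1 v), G2 (pi2 v)). Projecting a
   relation "G x lies in the span of G F" onto the two blocks gives (a); circuits of M1, and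
   circuits of M2 shifted into the second block, remain circuits of N, which gives (b).
   For a cyclic flat Z of M1 (+) M2, cyclicity forces the minimum in the rank formula to be
   attained at X = Z, so rho Z = rho1 (pi1 Z) + rho2 (pi2 Z). Flatness then yields
   Z = pi1 Z (+) pi2 Z with both summands cyclic flats of M1 and M2. Such a sum is a flat of N
   by (a), and it is cyclic in N: a hyperplane W of Z meets each summand in a subspace of
   codimension at most one, whose image under Gi spans that of the summand by cyclicity.
   Finally, subspaces X of an N-independent space are N-independent, and
   dim X = rhoN X <= rho1 (pi1 X) + rho2 (pi2 X), so every term of the minimum is nonnegative. *)

global_interpretation fv: vector_space "fscale :: 'k::field \<Rightarrow> (nat \<Rightarrow> 'k) \<Rightarrow> (nat \<Rightarrow> 'k)"
  by unfold_locales (auto simp: fscale_def fun_eq_iff algebra_simps)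

lemma fscale_apply: "fscale c v i = c * v i"
  by (simp add: fscale_def)

lemma fspan_eq: "fspan = fv.span"
  by (simp add: fspan_def fun_eq_iff)

lemma fdim_eq: "fdim = fv.dim"
  by (simp add: fdim_def fun_eq_iff)

lemma subsp_iff: "subsp n V \<longleftrightarrow> V \<subseteq> Fn n \<and> fv.subspace V"
  by (simp add: subsp_def)

lemma subspace_Fn: "fv.subspace (Fn n)"
  by (auto simp: fv.subspace_def Fn_def fscale_apply)

lemma Fn_mono: "m \<le> n \<Longrightarrow> Fn m \<subseteq> Fn n"
  by (auto simp: Fn_def)

lemma finite_Fn: "finite (Fn n :: (nat \<Rightarrow> 'k::{field,finite}) set)"
proof -
  have "Fn n \<subseteq>
      (\<lambda>xs i. if i < n then xs ! i else 0) ` {xs :: 'k list. set xs \<subseteq> UNIV \<and> length xs = n}"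
  proof
    fix f :: "nat \<Rightarrow> 'k" assume "f \<in> Fn n"
    then have "f = (\<lambda>i. if i < n then map f [0..<n] ! i else 0)"
      by (auto simp: Fn_def fun_eq_iff)
    then show "f \<in> (\<lambda>xs i. if i < n then xs ! i else 0) ` {xs. set xs \<subseteq> UNIV \<and> length xs = n}"
      by (intro image_eqI[where x = "map f [0..<n]"]) auto
  qed
  then show ?thesis
    by (rule finite_subset) (intro finite_imageI finite_lists_length_eq finite_UNIV)
qed

lemma finite_subsp: "subsp n (V :: (nat \<Rightarrow> 'k::{field,finite}) set) \<Longrightarrow> finite V"
  using finite_Fn finite_subset by (auto simp: subsp_iff)

section \<open>Dimension of finite sets of vectors\<close>

context vector_space
begin

lemma dim_mono_finite:
  assumes "finite T" "S \<subseteq> span T"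
  shows "dim S \<le> dim T"
proof -
  obtain B where B: "B \<subseteq> T" "independent B" "T \<subseteq> span B" "card B = dim T"
    using basis_exists by blast
  have "S \<subseteq> span B"
    using assms(2) B(3) span_mono span_span by blast
  then show ?thesis
    using dim_le_card B(1,4) assms(1) finite_subset by metis
qed

lemma dim_subset_finite: "finite T \<Longrightarrow> S \<subseteq> T \<Longrightarrow> dim S \<le> dim T"
  using dim_mono_finite span_superset by blast

lemma dim_insert_finite:
  assumes "finite S"
  shows "dim (insert x S) = (if x \<in> span S then dim S else Suc (dim S))"
proof (cases "x \<in> span S")
  case True
  then show ?thesis
    using span_redundant span_eq_dim by metis
next
  case False
  obtain B where B: "B \<subseteq> S" "independent B" "S \<subseteq> span B" "card B = dim S"
    using basis_exists by blast
  have span_B: "span B = span S"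
    using B(1,3) span_mono span_span by (metis subset_antisym)
  then have "x \<notin> B" "independent (insert x B)"
    using False B(2) span_superset independent_insertI by blast+
  moreover have "span (insert x B) = span (insert x S)"
    using span_B span_insert by metis
  ultimately have "dim (insert x S) = Suc (card B)"
    using dim_eq_card B(1) assms finite_subset by (metis card_insert_disjoint)
  then show ?thesis
    using False B(4) by simp
qed

lemma subset_span_if_dim_eq_finite:
  assumes "finite T" "S \<subseteq> T" "dim S = dim T"
  shows "T \<subseteq> span S"
proof
  fix x assume "x \<in> T"
  then have "dim (insert x S) \<le> dim T"
    using assms(1,2) dim_subset_finite by simp
  then show "x \<in> span S"
    using dim_insert_finite[of S x] assms finite_subset[OF assms(2,1)] by (auto split: if_splits)
qed

lemma dim_Un_le_finite:
  assumes "finite S" "finite T"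
  shows "dim (S \<union> T) \<le> dim S + dim T"
proof -
  obtain B where B: "B \<subseteq> S" "S \<subseteq> span B" "card B = dim S"
    using basis_exists by metis
  obtain C where C: "C \<subseteq> T" "T \<subseteq> span C" "card C = dim T"
    using basis_exists by metis
  have "S \<union> T \<subseteq> span (B \<union> C)"
    using B(2) C(2) span_mono[of B "B \<union> C"] span_mono[of C "B \<union> C"] by blast
  then have "dim (S \<union> T) \<le> card (B \<union> C)"
    using dim_le_card B(1) C(1) assms finite_subset by (metis finite_Un)
  also have "\<dots> \<le> card B + card C"
    by (rule card_Un_le)
  finally show ?thesis
    using B(3) C(3) by simp
qed

lemma dim_zero_space: "dim {0} = 0"
  using dim_span[of "{}"] dim_eq_card_independent[OF independent_empty] by simp

lemma span_insert_span: "span (insert x (span S)) = span (insert x S)"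
  unfolding span_insert span_span ..

lemma obtain_hyperplane:
  assumes "finite Z" "subspace Z" "subspace X" "X \<subseteq> Z" "X \<noteq> Z"
  obtains W x where "subspace W" "X \<subseteq> W" "W \<subseteq> Z" "x \<in> Z" "x \<notin> W" "span (insert x W) = Z"
proof -
  let ?P = "{W. subspace W \<and> X \<subseteq> W \<and> W \<subseteq> Z \<and> W \<noteq> Z}"
  have "?P \<subseteq> Pow Z"
    by blast
  then have "finite ?P"
    using assms(1) by (meson finite_Pow_iff finite_subset)
  moreover have "?P \<noteq> {}"
    using assms(3-5) by blast
  ultimately obtain W where W: "W \<in> ?P" and max: "\<forall>W' \<in> ?P. W \<subseteq> W' \<longrightarrow> W = W'"
    using finite_has_maximal by meson
  then obtain x where x: "x \<in> Z" "x \<notin> W"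
    by blast
  have sub: "W \<subseteq> span (insert x W)" "x \<in> span (insert x W)"
    by (auto intro: span_base)
  then have "span (insert x W) \<notin> ?P"
    using max x(2) by blast
  moreover have "span (insert x W) \<subseteq> Z"
    using x(1) W assms(2) by (intro span_minimal) auto
  ultimately have "span (insert x W) = Z"
    using W sub(1) by auto
  with W x show ?thesis
    using that by blast
qed

end

section \<open>Semilinear maps\<close>

definition semilinear :: "('k::field \<Rightarrow> 'l::field) \<Rightarrow> ((nat \<Rightarrow> 'k) \<Rightarrow> (nat \<Rightarrow> 'l)) \<Rightarrow> bool" where
  "semilinear h f \<longleftrightarrow> (\<forall>x y. f (x + y) = f x + f y) \<and> (\<forall>c x. f (fscale c x) = fscale (h c) (f x))"

lemma semilinear_if_module_hom: "module_hom fscale fscale f \<Longrightarrow> semilinear (\<lambda>c. c) f"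
  unfolding semilinear_def using module_hom.add module_hom.scale by blast

lemma semilinear_zero: "semilinear h f \<Longrightarrow> f 0 = 0"
  unfolding semilinear_def by (metis add_cancel_right_right add_0)

lemma span_image_span_semilinear:
  assumes f: "semilinear h f"
  shows "fv.span (f ` fv.span S) = fv.span (f ` S)"
proof
  have "f x \<in> fv.span (f ` S)" if "x \<in> fv.span S" for x
    using that
  proof (induction rule: fv.span_induct_alt)
    case base
    then show ?case
      using semilinear_zero[OF f] fv.span_zero by metis
  next
    case (step c x y)
    from f have "f (fscale c x + y) = fscale (h c) (f x) + f y"
      unfolding semilinear_def by metis
    then show ?case
      using step by (metis fv.span_add fv.span_scale fv.span_base imageI)
  qed
  then show "fv.span (f ` fv.span S) \<subseteq> fv.span (f ` S)"
    by (intro fv.span_minimal) auto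
qed (intro fv.span_mono image_mono fv.span_superset)

lemma dim_image_le_semilinear:
  assumes f: "semilinear h f" and "finite S"
  shows "fv.dim (f ` S) \<le> fv.dim S"
proof -
  obtain B where B: "B \<subseteq> S" "S \<subseteq> fv.span B" "card B = fv.dim S"
    using fv.basis_exists by metis
  have "f ` S \<subseteq> f ` fv.span B"
    using B(2) by (rule image_mono)
  also have "\<dots> \<subseteq> fv.span (f ` B)"
    using span_image_span_semilinear[OF f, of B] fv.span_superset by metis
  finally have "f ` S \<subseteq> fv.span (f ` B)" .
  moreover have "finite B"
    using B(1) \<open>finite S\<close> by (rule finite_subset)
  ultimately have "fv.dim (f ` S) \<le> card (f ` B)"
    by (intro fv.dim_le_card) auto
  also have "\<dots> \<le> card B"
    using \<open>finite B\<close> by (rule card_image_le)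
  finally show ?thesis
    using B(3) by simp
qed

text \<open>That is, dim X - dim (f ` X) \<le> dim V - dim (f ` V), without truncated subtraction.\<close>

lemma dim_image_add_dim_le_semilinear:
  assumes f: "semilinear h f" and "finite V" "X \<subseteq> V"
  shows "fv.dim (f ` V) + fv.dim X \<le> fv.dim (f ` X) + fv.dim V"
proof -
  obtain BX where BX: "BX \<subseteq> X" "fv.independent BX" "X \<subseteq> fv.span BX" "card BX = fv.dim X"
    using fv.basis_exists by metis
  obtain BV where BV: "BX \<subseteq> BV" "BV \<subseteq> V" "fv.independent BV" "V \<subseteq> fv.span BV"
    using fv.maximal_independent_subset_extend[of BX V] BX(1,2) \<open>X \<subseteq> V\<close> by blast
  have fin: "finite BV" "finite X"
    using BV(2) \<open>finite V\<close> \<open>X \<subseteq> V\<close> finite_subset by blast+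
  have "f ` V \<subseteq> f ` fv.span BV"
    using BV(4) by (rule image_mono)
  also have "\<dots> \<subseteq> fv.span (f ` BV)"
    using span_image_span_semilinear[OF f, of BV] fv.span_superset by metis
  also have "\<dots> \<subseteq> fv.span (f ` X \<union> f ` (BV - BX))"
    using BX(1) by (intro fv.span_mono) blast
  finally have "fv.dim (f ` V) \<le> fv.dim (f ` X \<union> f ` (BV - BX))"
    using fin by (intro fv.dim_mono_finite) auto
  also have "\<dots> \<le> fv.dim (f ` X) + fv.dim (f ` (BV - BX))"
    using fin by (intro fv.dim_Un_le_finite) auto
  also have "fv.dim (f ` (BV - BX)) \<le> card (f ` (BV - BX))"
    using fin by (intro fv.dim_le_card') auto
  also have "\<dots> \<le> card BV - card BX"
    using card_image_le[of "BV - BX" f] card_Diff_subset[OF finite_subset[OF BV(1)] BV(1)] fin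
    by simp
  finally show ?thesis
    using fv.basis_card_eq_dim[OF BV(2,4,3)] BX(4) card_mono[OF fin(1) BV(1)] by simp
qed

lemma dim_image_eq_if_left_inverse:
  assumes "module_hom fscale fscale e" "module_hom fscale fscale p" "finite V"
    and "\<And>v. v \<in> V \<Longrightarrow> p (e v) = v"
  shows "fv.dim (e ` V) = fv.dim V"
proof -
  have "p ` e ` V = V"
    using assms(4) by (force simp: image_image)
  then have "fv.dim V \<le> fv.dim (e ` V)"
    using dim_image_le_semilinear[OF semilinear_if_module_hom[OF assms(2)], of "e ` V"] assms(3)
    by simp
  then show ?thesis
    using dim_image_le_semilinear[OF semilinear_if_module_hom[OF assms(1)] assms(3)] by simp
qed

lemma image_in_span_transfer:
  assumes q: "module_hom fscale fscale q" and comm: "\<And>v. q (f v) = g (p v)"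
    and F: "p ` F \<subseteq> F'" and x: "f x \<in> fv.span (f ` F)"
  shows "g (p x) \<in> fv.span (g ` F')"
proof -
  have "g (p x) \<in> q ` fv.span (f ` F)"
    using x comm by (metis imageI)
  also have "\<dots> = fv.span (g ` p ` F)"
    using module_hom.span_image[OF q, of "f ` F"] comm by (simp add: image_image)
  also have "\<dots> \<subseteq> fv.span (g ` F')"
    using F by (intro fv.span_mono image_mono)
  finally show ?thesis .
qed

section \<open>Coordinates of a direct sum\<close>

definition shift :: "nat \<Rightarrow> (nat \<Rightarrow> 'k::zero) \<Rightarrow> (nat \<Rightarrow> 'k)" where
  "shift k w = (\<lambda>i. if i < k then 0 else w (i - k))"

lemma module_hom_id: "module_hom fscale fscale (\<lambda>x. x)"
  by (simp add: module_hom_iff module_iff_vector_space fv.vector_space_axioms)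

lemma module_hom_proj1: "module_hom fscale fscale (proj1 n)"
  by (auto simp: module_hom_iff module_iff_vector_space fv.vector_space_axioms
      fscale_apply proj1_def fun_eq_iff)

lemma module_hom_proj2: "module_hom fscale fscale (proj2 n1 n2)"
  by (auto simp: module_hom_iff module_iff_vector_space fv.vector_space_axioms
      fscale_apply proj2_def fun_eq_iff)

lemma module_hom_shift: "module_hom fscale fscale (shift k)"
  by (auto simp: module_hom_iff module_iff_vector_space fv.vector_space_axioms
      fscale_apply shift_def fun_eq_iff)

lemma proj1_Fn [simp]: "proj1 n v \<in> Fn n"
  by (simp add: proj1_def Fn_def)

lemma proj2_Fn [simp]: "proj2 n1 n2 v \<in> Fn n2"
  by (simp add: proj2_def Fn_def)

lemma shift_Fn: "w \<in> Fn n2 \<Longrightarrow> shift n1 w \<in> Fn (n1 + n2)"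
  by (auto simp: shift_def Fn_def)

lemma proj1_id: "v \<in> Fn n \<Longrightarrow> proj1 n v = v"
  by (auto simp: proj1_def Fn_def fun_eq_iff)

lemma proj2_Fn_first: "v \<in> Fn n1 \<Longrightarrow> proj2 n1 n2 v = 0"
  by (auto simp: proj2_def Fn_def fun_eq_iff)

lemma proj1_shift [simp]: "proj1 n (shift n w) = 0"
  by (auto simp: proj1_def shift_def fun_eq_iff)

lemma proj2_shift: "w \<in> Fn n2 \<Longrightarrow> proj2 n1 n2 (shift n1 w) = w"
  by (auto simp: proj2_def shift_def Fn_def fun_eq_iff)

lemma proj1_add_shift_proj2:
  assumes "v \<in> Fn (n1 + n2)"
  shows "proj1 n1 v + shift n1 (proj2 n1 n2 v) = v"
  using assms by (auto simp: Fn_def proj1_def proj2_def shift_def fun_eq_iff)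

lemma proj1_zero [simp]: "proj1 n 0 = 0"
  by (auto simp: proj1_def fun_eq_iff)

lemma proj2_zero [simp]: "proj2 n1 n2 0 = 0"
  by (auto simp: proj2_def fun_eq_iff)

lemma shift_zero [simp]: "shift n 0 = 0"
  by (auto simp: shift_def fun_eq_iff)

lemma dim_shift: "V \<subseteq> Fn m \<Longrightarrow> finite V \<Longrightarrow> fv.dim (shift k ` V) = fv.dim V"
  by (rule dim_image_eq_if_left_inverse[OF module_hom_shift module_hom_proj2[of k m]])
    (auto simp: proj2_shift)

lemma subsp_dsum_space:
  assumes "fv.subspace V1" "fv.subspace V2"
  shows "subsp (n1 + n2) (dsum_space n1 n2 V1 V2)"
proof -
  have "dsum_space n1 n2 V1 V2 = Fn (n1 + n2) \<inter> proj1 n1 -` V1 \<inter> proj2 n1 n2 -` V2"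
    by (auto simp: dsum_space_def)
  then show ?thesis
    using assms subspace_Fn module_hom.subspace_vimage[OF module_hom_proj1]
      module_hom.subspace_vimage[OF module_hom_proj2]
    by (auto simp: subsp_iff dsum_space_def intro!: fv.subspace_inter)
qed

lemma dsum_space_span:
  assumes A: "A \<subseteq> Fn n1" and B: "B \<subseteq> Fn n2"
  shows "dsum_space n1 n2 (fv.span A) (fv.span B) = fv.span (A \<union> shift n1 ` B)"
proof
  show "dsum_space n1 n2 (fv.span A) (fv.span B) \<subseteq> fv.span (A \<union> shift n1 ` B)"
  proof
    fix v assume "v \<in> dsum_space n1 n2 (fv.span A) (fv.span B)"
    then have v: "v \<in> Fn (n1 + n2)" "proj1 n1 v \<in> fv.span A" "proj2 n1 n2 v \<in> fv.span B"
      by (simp_all add: dsum_space_def)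
    have first: "proj1 n1 v \<in> fv.span (A \<union> shift n1 ` B)"
      using v(2) fv.span_mono[of A "A \<union> shift n1 ` B"] by blast
    have "shift n1 (proj2 n1 n2 v) \<in> shift n1 ` fv.span B"
      using v(3) by (rule imageI)
    also have "\<dots> = fv.span (shift n1 ` B)"
      by (rule module_hom.span_image[OF module_hom_shift, symmetric])
    also have "\<dots> \<subseteq> fv.span (A \<union> shift n1 ` B)"
      by (rule fv.span_mono) blast
    finally have "shift n1 (proj2 n1 n2 v) \<in> fv.span (A \<union> shift n1 ` B)" .
    with first show "v \<in> fv.span (A \<union> shift n1 ` B)"
      using fv.span_add proj1_add_shift_proj2[OF v(1)] by metis
  qed
  have "a \<in> dsum_space n1 n2 (fv.span A) (fv.span B)" if "a \<in> A" for a
    using that A Fn_mono[of n1 "n1 + n2"] fv.span_base[of a A] fv.span_zero[of B]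
    by (auto simp: dsum_space_def proj1_id proj2_Fn_first)
  moreover have "shift n1 b \<in> dsum_space n1 n2 (fv.span A) (fv.span B)" if "b \<in> B" for b
    using that B fv.span_base[of b B] fv.span_zero[of A]
    by (auto simp: dsum_space_def proj2_shift shift_Fn)
  ultimately show "fv.span (A \<union> shift n1 ` B) \<subseteq> dsum_space n1 n2 (fv.span A) (fv.span B)"
    using subsp_dsum_space[OF fv.subspace_span fv.subspace_span, of n1 n2 A B]
    by (intro fv.span_minimal) (auto simp: subsp_iff)
qed

lemma subsp_proj1_image: "fv.subspace V \<Longrightarrow> subsp n1 (proj1 n1 ` V)"
  using module_hom.subspace_image[OF module_hom_proj1] by (auto simp: subsp_iff)

lemma subsp_proj2_image: "fv.subspace V \<Longrightarrow> subsp n2 (proj2 n1 n2 ` V)"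
  using module_hom.subspace_image[OF module_hom_proj2] by (auto simp: subsp_iff)

lemma subset_dsum_space:
  assumes "subsp n1 A" "subsp n2 B"
  shows "A \<union> shift n1 ` B \<subseteq> dsum_space n1 n2 A B"
  using dsum_space_span[of A n1 B n2] fv.span_superset[of "A \<union> shift n1 ` B"] assms
  by (simp add: subsp_iff fv.span_eq_iff[THEN iffD2])

lemma span_insert_dsum_space_first:
  assumes "subsp n1 A" "subsp n2 B" "x \<in> Fn n1"
  shows "fv.span (insert x (dsum_space n1 n2 A B)) = dsum_space n1 n2 (fv.span (insert x A)) B"
proof -
  have "fv.span (insert x (dsum_space n1 n2 A B)) = fv.span (insert x (A \<union> shift n1 ` B))"
    using dsum_space_span[of A n1 B n2] assms(1,2) fv.span_insert_span
    by (simp add: subsp_iff fv.span_eq_iff[THEN iffD2])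
  also have "\<dots> = dsum_space n1 n2 (fv.span (insert x A)) (fv.span B)"
    using dsum_space_span[of "insert x A" n1 B n2] assms by (simp add: subsp_iff)
  finally show ?thesis
    using assms(2) by (simp add: subsp_iff fv.span_eq_iff[THEN iffD2])
qed

lemma span_insert_dsum_space_second:
  assumes "subsp n1 A" "subsp n2 B" "y \<in> Fn n2"
  shows "fv.span (insert (shift n1 y) (dsum_space n1 n2 A B)) =
    dsum_space n1 n2 A (fv.span (insert y B))"
proof -
  have "fv.span (insert (shift n1 y) (dsum_space n1 n2 A B)) = fv.span (A \<union> shift n1 ` insert y B)"
    using dsum_space_span[of A n1 B n2] assms(1,2) fv.span_insert_span
    by (simp add: subsp_iff fv.span_eq_iff[THEN iffD2])
  also have "\<dots> = dsum_space n1 n2 (fv.span A) (fv.span (insert y B))"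
    using dsum_space_span[of A n1 "insert y B" n2] assms by (simp add: subsp_iff)
  finally show ?thesis
    using assms(1) by (simp add: subsp_iff fv.span_eq_iff[THEN iffD2])
qed

lemma qflatD: "qflat n rho F \<Longrightarrow> x \<in> Fn n \<Longrightarrow> x \<notin> F \<Longrightarrow> rho F < rho (fv.span (insert x F))"
  by (simp add: qflat_def fspan_eq)

lemma qflatI:
  "subsp n F \<Longrightarrow> (\<And>x. x \<in> Fn n \<Longrightarrow> x \<notin> F \<Longrightarrow> rho F < rho (fv.span (insert x F))) \<Longrightarrow> qflat n rho F"
  by (simp add: qflat_def fspan_eq)

lemma qcyclicD:
  "qcyclic n rho Z \<Longrightarrow> x \<in> Z \<Longrightarrow> subsp n W \<Longrightarrow> W \<subseteq> Z \<Longrightarrow> fv.span (insert x W) = Z \<Longrightarrow> rho W = rho Z"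
  unfolding qcyclic_def qcyc_def fspan_eq by blast

lemma qcyclicI:
  "subsp n Z \<Longrightarrow>
    (\<And>x W. x \<in> Z \<Longrightarrow> subsp n W \<Longrightarrow> W \<subseteq> Z \<Longrightarrow> fv.span (insert x W) = Z \<Longrightarrow> rho W = rho Z) \<Longrightarrow>
    qcyclic n rho Z"
  unfolding qcyclic_def qcyc_def fspan_eq by auto

lemma qcyclic_subsp: "qcyclic n rho Z \<Longrightarrow> subsp n Z"
  by (simp add: qcyclic_def)

lemma span_insert_preimage_eq:
  assumes e: "module_hom fscale fscale e" and Z: "fv.subspace Z" and W: "fv.subspace W"
    and ZW: "\<And>z. z \<in> Z \<Longrightarrow> e z \<in> fv.span (insert x W)"
    and y: "y \<in> Z" "e y \<notin> W"
  shows "fv.span (insert y {z \<in> Z. e z \<in> W}) = Z"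
proof
  show "fv.span (insert y {z \<in> Z. e z \<in> W}) \<subseteq> Z"
    using y(1) Z by (intro fv.span_minimal) auto
  show "Z \<subseteq> fv.span (insert y {z \<in> Z. e z \<in> W})"
  proof
    fix z assume z: "z \<in> Z"
    obtain c where c: "e z - fscale c x \<in> W"
      using ZW[OF z] W fv.span_breakdown_eq by (metis fv.span_eq_iff)
    obtain d where d: "e y - fscale d x \<in> W"
      using ZW[OF y(1)] W fv.span_breakdown_eq by (metis fv.span_eq_iff)
    have "d \<noteq> 0"
      using d y(2) fv.scale_zero_left by (metis diff_zero)
    define k where "k = c / d"
    have "e (z - fscale k y) = (e z - fscale c x) - fscale k (e y - fscale d x)"
      using \<open>d \<noteq> 0\<close> module_hom.diff[OF e] module_hom.scale[OF e]
      by (simp add: fun_eq_iff fscale_apply k_def right_diff_distrib)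
    also have "\<dots> \<in> W"
      using c d W fv.subspace_diff fv.subspace_scale by blast
    finally have "z - fscale k y \<in> {z \<in> Z. e z \<in> W}"
      using z y(1) Z fv.subspace_diff fv.subspace_scale by blast
    then show "z \<in> fv.span (insert y {z \<in> Z. e z \<in> W})"
      unfolding fv.span_breakdown_eq by (blast intro: fv.span_base)
  qed
qed

context
  fixes m n :: nat
    and e p :: "(nat \<Rightarrow> 'a::{field,finite}) \<Rightarrow> (nat \<Rightarrow> 'a)"
    and rho rho' :: "(nat \<Rightarrow> 'a) set \<Rightarrow> nat"
  assumes e: "module_hom fscale fscale e" and p: "module_hom fscale fscale p"
    and p_e: "\<And>v. v \<in> Fn m \<Longrightarrow> p (e v) = v" and e_Fn: "\<And>v. v \<in> Fn m \<Longrightarrow> e v \<in> Fn n"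
    and rho': "\<And>V. V \<subseteq> Fn m \<Longrightarrow> rho' (e ` V) = rho V"
begin

lemma qindep_image_iff:
  assumes V: "subsp m V"
  shows "qindep n rho' (e ` V) \<longleftrightarrow> qindep m rho V"
proof -
  have "subsp n (e ` V)"
    using V e_Fn module_hom.subspace_image[OF e] by (auto simp: subsp_iff)
  moreover have "fv.dim (e ` V) = fv.dim V"
    using V p_e
    by (intro dim_image_eq_if_left_inverse[OF e p finite_subsp[OF V]]) (auto simp: subsp_iff)
  ultimately show ?thesis
    using V rho' by (simp add: qindep_def fdim_eq subsp_iff)
qed

lemma qcircuit_image:
  assumes C: "qcircuit m rho C"
  shows "qcircuit n rho' (e ` C)"
proof -
  have Cs: "subsp m C"
    using C by (simp add: qcircuit_def)
  have "qindep n rho' D" if D: "subsp n D" "D \<subset> e ` C" for D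
  proof -
    have CF: "C \<subseteq> Fn m"
      using Cs by (simp add: subsp_iff)
    have D_eq: "e ` p ` D = D"
      using D(2) CF p_e by (force simp: image_image)
    have "p ` D \<subseteq> C"
      using D(2) CF p_e by force
    moreover have "p ` D \<noteq> C"
      using D(2) D_eq by blast
    moreover have "subsp m (p ` D)"
      using \<open>p ` D \<subseteq> C\<close> CF D(1) module_hom.subspace_image[OF p] by (auto simp: subsp_iff)
    ultimately have "qindep m rho (p ` D)"
      using C by (auto simp: qcircuit_def)
    then show ?thesis
      using qindep_image_iff[OF \<open>subsp m (p ` D)\<close>] D_eq by simp
  qed
  moreover have "subsp n (e ` C)"
    using Cs e_Fn module_hom.subspace_image[OF e] by (auto simp: subsp_iff)
  ultimately show ?thesis
    using C qindep_image_iff[OF Cs] by (simp add: qcircuit_def)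
qed

end

section \<open>Rank functions of matrices\<close>

lemma semilinear_mat_app: "field_emb emb \<Longrightarrow> semilinear emb (mat_app emb a n G)"
  by (auto simp: semilinear_def mat_app_def field_emb_def fun_eq_iff fscale_apply
      distrib_left sum.distrib sum_distrib_left mult.left_commute)

lemma mat_app_Fn [simp]: "mat_app emb a n G y \<in> Fn a"
  by (simp add: mat_app_def Fn_def)

lemma rep_rank_eq_dim: "rep_rank emb a n G V = fv.dim (mat_app emb a n G ` V)"
  by (simp add: rep_rank_def fdim_eq fspan_eq)

lemma rep_rank_mono: "finite W \<Longrightarrow> V \<subseteq> W \<Longrightarrow> rep_rank emb a n G V \<le> rep_rank emb a n G W"
  unfolding rep_rank_eq_dim by (intro fv.dim_subset_finite) auto

lemma rep_rank_le_dim: "field_emb emb \<Longrightarrow> finite V \<Longrightarrow> rep_rank emb a n G V \<le> fv.dim V"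
  unfolding rep_rank_eq_dim by (rule dim_image_le_semilinear[OF semilinear_mat_app])

lemma rep_rank_zero: "field_emb emb \<Longrightarrow> rep_rank emb a n G {0} = 0"
  using rep_rank_le_dim[of emb "{0}" a n G] by (simp add: fv.dim_zero_space)

lemma rep_rank_eq_iff_subset_span:
  assumes "finite V" "W \<subseteq> V"
  shows "rep_rank emb a n G W = rep_rank emb a n G V \<longleftrightarrow>
    mat_app emb a n G ` V \<subseteq> fv.span (mat_app emb a n G ` W)"
  using assms fv.subset_span_if_dim_eq_finite[of "mat_app emb a n G ` V" "mat_app emb a n G ` W"]
    fv.dim_subset_finite[of "mat_app emb a n G ` V" "mat_app emb a n G ` W"]
    fv.dim_mono_finite[of "mat_app emb a n G ` W" "mat_app emb a n G ` V"] finite_subset[of W V]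
  unfolding rep_rank_eq_dim by (auto intro: le_antisym)

lemma rep_rank_span_insert_gt_iff:
  assumes "field_emb emb" "finite F"
  shows "rep_rank emb a n G F < rep_rank emb a n G (fv.span (insert x F)) \<longleftrightarrow>
    mat_app emb a n G x \<notin> fv.span (mat_app emb a n G ` F)"
proof -
  have "rep_rank emb a n G (fv.span (insert x F)) =
      fv.dim (insert (mat_app emb a n G x) (mat_app emb a n G ` F))"
    unfolding rep_rank_eq_dim
      fv.span_eq_dim[OF span_image_span_semilinear[OF semilinear_mat_app[OF assms(1)]]]
    by simp
  then show ?thesis
    using assms(2) by (simp add: fv.dim_insert_finite rep_rank_eq_dim)
qed

lemma qflat_rep_rank_iff:
  fixes emb :: "'a::{field,finite} \<Rightarrow> 'b::field"
  assumes "field_emb emb"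
  shows "qflat m (rep_rank emb a n G) F \<longleftrightarrow>
    subsp m F \<and> (\<forall>x \<in> Fn m - F. mat_app emb a n G x \<notin> fv.span (mat_app emb a n G ` F))"
proof (cases "subsp m F")
  case True
  then show ?thesis
    using rep_rank_span_insert_gt_iff[OF assms finite_subsp[OF True]]
    by (auto simp: qflat_def fspan_eq)
qed (simp add: qflat_def)

lemma qindep_rep_rank_subspace:
  fixes emb :: "'a::{field,finite} \<Rightarrow> 'b::field"
  assumes emb: "field_emb emb" and V: "qindep m (rep_rank emb a n G) V"
    and X: "subsp m X" "X \<subseteq> V"
  shows "qindep m (rep_rank emb a n G) X"
proof -
  have "finite V"
    using V finite_subsp by (auto simp: qindep_def)
  then have "rep_rank emb a n G V + fv.dim X \<le> rep_rank emb a n G X + fv.dim V"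
    unfolding rep_rank_eq_dim using X(2)
    by (rule dim_image_add_dim_le_semilinear[OF semilinear_mat_app[OF emb]])
  moreover have "rep_rank emb a n G X \<le> fv.dim X"
    using rep_rank_le_dim[OF emb] \<open>finite V\<close> X(2) finite_subset by blast
  ultimately show ?thesis
    using V X(1) by (simp add: qindep_def fdim_eq)
qed

lemma rep_rank_cyclic_subset_span_preimage:
  fixes emb :: "'a::{field,finite} \<Rightarrow> 'b::field"
  assumes emb: "field_emb emb" and Z: "qcyclic m (rep_rank emb a n G) Z"
    and e: "module_hom fscale fscale e" and W: "fv.subspace W"
    and ZW: "\<And>z. z \<in> Z \<Longrightarrow> e z \<in> fv.span (insert x W)"
  shows "mat_app emb a n G ` Z \<subseteq> fv.span (mat_app emb a n G ` {z \<in> Z. e z \<in> W})"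
proof (cases "Z \<subseteq> {z \<in> Z. e z \<in> W}")
  case True
  then have "mat_app emb a n G ` Z \<subseteq> mat_app emb a n G ` {z \<in> Z. e z \<in> W}"
    by (rule image_mono)
  then show ?thesis
    using fv.span_superset by (rule subset_trans)
next
  case False
  then obtain y where y: "y \<in> Z" "e y \<notin> W"
    by blast
  have Zs: "Z \<subseteq> Fn m" "fv.subspace Z"
    using qcyclic_subsp[OF Z] by (simp_all add: subsp_iff)
  have "{z \<in> Z. e z \<in> W} = Z \<inter> e -` W"
    by blast
  then have sub: "subsp m {z \<in> Z. e z \<in> W}"
    using Zs fv.subspace_inter[OF Zs(2) module_hom.subspace_vimage[OF e W]] unfolding subsp_iff
    by (metis inf.coboundedI1)
  have "{z \<in> Z. e z \<in> W} \<subseteq> Z"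
    by blast
  moreover have "fv.span (insert y {z \<in> Z. e z \<in> W}) = Z"
    by (rule span_insert_preimage_eq[OF e Zs(2) W ZW y])
  ultimately have "rep_rank emb a n G {z \<in> Z. e z \<in> W} = rep_rank emb a n G Z"
    by (rule qcyclicD[OF Z y(1) sub])
  then show ?thesis
    by (rule iffD1[OF rep_rank_eq_iff_subset_span[OF finite_subsp[OF qcyclic_subsp[OF Z]] \<open>_ \<subseteq> Z\<close>]])
qed

section \<open>The direct sum of two q-matroids\<close>

context
  fixes n1 n2 :: nat and r1 r2 :: "(nat \<Rightarrow> 'a::{field,finite}) set \<Rightarrow> nat"
begin

definition dsum_defect :: "(nat \<Rightarrow> 'a) set \<Rightarrow> int" where
  "dsum_defect X = int (r1 (proj1 n1 ` X)) + int (r2 (proj2 n1 n2 ` X)) - int (fv.dim X)"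

lemma dsum_rank_eq_Min:
  "dsum_rank n1 r1 n2 r2 V =
    nat (int (fv.dim V) + Min (dsum_defect ` {X. subsp (n1 + n2) X \<and> X \<subseteq> V}))"
  unfolding dsum_rank_def dsum_defect_def fdim_eq by (simp add: setcompr_eq_image)

lemma finite_dsum_defects: "finite (dsum_defect ` {X. subsp (n1 + n2) X \<and> X \<subseteq> V})"
proof -
  have "{X. subsp (n1 + n2) X \<and> X \<subseteq> V} \<subseteq> Pow (Fn (n1 + n2))"
    by (auto simp: subsp_iff)
  then show ?thesis
    using finite_Fn by (metis finite_Pow_iff finite_imageI finite_subset)
qed

lemma dsum_rank_le_defect:
  "subsp (n1 + n2) X \<Longrightarrow> X \<subseteq> V \<Longrightarrow> dsum_rank n1 r1 n2 r2 V \<le> nat (int (fv.dim V) + dsum_defect X)"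
  unfolding dsum_rank_eq_Min using finite_dsum_defects by (intro nat_mono add_left_mono Min_le) auto

lemma dsum_rank_le:
  "subsp (n1 + n2) V \<Longrightarrow> dsum_rank n1 r1 n2 r2 V \<le> r1 (proj1 n1 ` V) + r2 (proj2 n1 n2 ` V)"
  using dsum_rank_le_defect[of V V] by (simp add: dsum_defect_def)

lemma obtain_min_dsum_defect:
  assumes "subsp (n1 + n2) V"
  obtains X where "subsp (n1 + n2) X" "X \<subseteq> V"
    "dsum_rank n1 r1 n2 r2 V = nat (int (fv.dim V) + dsum_defect X)"
proof -
  have "Min (dsum_defect ` {X. subsp (n1 + n2) X \<and> X \<subseteq> V}) \<in>
      dsum_defect ` {X. subsp (n1 + n2) X \<and> X \<subseteq> V}"
    using assms finite_dsum_defects by (intro Min_in) auto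
  then obtain X where X: "subsp (n1 + n2) X" "X \<subseteq> V"
    "Min (dsum_defect ` {X. subsp (n1 + n2) X \<and> X \<subseteq> V}) = dsum_defect X"
    by auto
  show ?thesis
    by (rule that[OF X(1,2)]) (simp add: dsum_rank_eq_Min X(3))
qed

lemma qindep_dsum_rankI:
  assumes V: "subsp (n1 + n2) V" and "r1 {0} = 0" "r2 {0} = 0"
    and dim_le: "\<And>X. subsp (n1 + n2) X \<Longrightarrow> X \<subseteq> V \<Longrightarrow>
      fv.dim X \<le> r1 (proj1 n1 ` X) + r2 (proj2 n1 n2 ` X)"
  shows "qindep (n1 + n2) (dsum_rank n1 r1 n2 r2) V"
proof -
  have "Min (dsum_defect ` {X. subsp (n1 + n2) X \<and> X \<subseteq> V}) = 0"
  proof (rule Min_eqI[OF finite_dsum_defects])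
    show "0 \<le> d" if "d \<in> dsum_defect ` {X. subsp (n1 + n2) X \<and> X \<subseteq> V}" for d
      using that dim_le by (force simp: dsum_defect_def)
    have "subsp (n1 + n2) {0}" "{0} \<subseteq> V"
      using V fv.subspace_0 by (auto simp: subsp_iff Fn_def fv.subspace_def)
    moreover have "dsum_defect {0} = 0"
      using assms(2,3) by (simp add: dsum_defect_def fv.dim_zero_space)
    ultimately show "0 \<in> dsum_defect ` {X. subsp (n1 + n2) X \<and> X \<subseteq> V}"
      by (metis (mono_tags, lifting) image_eqI mem_Collect_eq)
  qed
  then show ?thesis
    using V by (simp add: qindep_def dsum_rank_eq_Min fdim_eq)
qed

lemma dsum_rank_cyclic:
  assumes cyc: "qcyclic (n1 + n2) (dsum_rank n1 r1 n2 r2) Z"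
  shows "dsum_rank n1 r1 n2 r2 Z = r1 (proj1 n1 ` Z) + r2 (proj2 n1 n2 ` Z)"
proof -
  have Z: "subsp (n1 + n2) Z" "finite Z"
    using qcyclic_subsp[OF cyc] finite_subsp by auto
  obtain X where X: "subsp (n1 + n2) X" "X \<subseteq> Z"
    and min: "dsum_rank n1 r1 n2 r2 Z = nat (int (fv.dim Z) + dsum_defect X)"
    using obtain_min_dsum_defect[OF Z(1)] .
  have "X = Z"
  proof (rule ccontr)
    assume "X \<noteq> Z"
    then obtain W x where W: "fv.subspace W" "X \<subseteq> W" "W \<subseteq> Z"
      and x: "x \<in> Z" "x \<notin> W" "fv.span (insert x W) = Z"
      using fv.obtain_hyperplane[OF Z(2)] X Z(1) by (metis subsp_iff)
    have Ws: "subsp (n1 + n2) W"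
      using W Z(1) by (auto simp: subsp_iff)
    \<comment> \<open>the rank formula at W, with the same minimiser X, undercuts the rank of Z by one\<close>
    have "fv.dim Z = Suc (fv.dim W)"
      using x fv.dim_insert_finite[of W x] Z(2) W(1,3) finite_subset
      by (metis fv.dim_span fv.span_eq_iff)
    moreover have "fv.dim X \<le> fv.dim W"
      using W(2,3) Z(2) finite_subset fv.dim_subset_finite by metis
    moreover have "dsum_rank n1 r1 n2 r2 W \<le> nat (int (fv.dim W) + dsum_defect X)"
      using dsum_rank_le_defect[OF X(1) W(2)] .
    moreover have "dsum_rank n1 r1 n2 r2 W = dsum_rank n1 r1 n2 r2 Z"
      using qcyclicD[OF cyc x(1) Ws W(3) x(3)] .
    ultimately show False
      using min by (simp add: dsum_defect_def)
  qed
  then show ?thesis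
    using min by (simp add: dsum_defect_def)
qed

lemma dsum_rank_cyclic_flat_less:
  assumes Z: "Z \<in> cyclic_flats (n1 + n2) (dsum_rank n1 r1 n2 r2)"
    and u: "u \<in> Fn (n1 + n2)" "u \<notin> Z"
  shows "r1 (proj1 n1 ` Z) + r2 (proj2 n1 n2 ` Z) <
    r1 (fv.span (insert (proj1 n1 u) (proj1 n1 ` Z))) +
    r2 (fv.span (insert (proj2 n1 n2 u) (proj2 n1 n2 ` Z)))"
proof -
  have flat: "qflat (n1 + n2) (dsum_rank n1 r1 n2 r2) Z"
    and cyc: "qcyclic (n1 + n2) (dsum_rank n1 r1 n2 r2) Z"
    using Z by (simp_all add: cyclic_flats_def)
  let ?Y = "fv.span (insert u Z)"
  have "insert u Z \<subseteq> Fn (n1 + n2)"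
    using u(1) qcyclic_subsp[OF cyc] by (simp add: subsp_iff)
  then have "?Y \<subseteq> Fn (n1 + n2)"
    using subspace_Fn by (rule fv.span_minimal)
  then have "dsum_rank n1 r1 n2 r2 ?Y \<le> r1 (proj1 n1 ` ?Y) + r2 (proj2 n1 n2 ` ?Y)"
    by (intro dsum_rank_le) (simp add: subsp_iff)
  moreover have "proj1 n1 ` ?Y = fv.span (insert (proj1 n1 u) (proj1 n1 ` Z))"
    using module_hom.span_image[OF module_hom_proj1, of n1 "insert u Z"] by simp
  moreover have "proj2 n1 n2 ` ?Y = fv.span (insert (proj2 n1 n2 u) (proj2 n1 n2 ` Z))"
    using module_hom.span_image[OF module_hom_proj2, of n1 n2 "insert u Z"] by simp
  ultimately have "dsum_rank n1 r1 n2 r2 ?Y \<le>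
      r1 (fv.span (insert (proj1 n1 u) (proj1 n1 ` Z))) +
      r2 (fv.span (insert (proj2 n1 n2 u) (proj2 n1 n2 ` Z)))"
    by (simp only:)
  then show ?thesis
    using qflatD[OF flat u] dsum_rank_cyclic[OF cyc] by linarith
qed

lemma cyclic_flat_dsum_rank_eq_dsum_space:
  assumes Z: "Z \<in> cyclic_flats (n1 + n2) (dsum_rank n1 r1 n2 r2)"
  shows "Z = dsum_space n1 n2 (proj1 n1 ` Z) (proj2 n1 n2 ` Z)"
proof
  have Zs: "Z \<subseteq> Fn (n1 + n2)" "fv.subspace Z"
    using Z by (simp_all add: cyclic_flats_def qcyclic_def subsp_iff)
  then show "Z \<subseteq> dsum_space n1 n2 (proj1 n1 ` Z) (proj2 n1 n2 ` Z)"
    by (auto simp: dsum_space_def)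
  show "dsum_space n1 n2 (proj1 n1 ` Z) (proj2 n1 n2 ` Z) \<subseteq> Z"
  proof
    fix u assume "u \<in> dsum_space n1 n2 (proj1 n1 ` Z) (proj2 n1 n2 ` Z)"
    then have u: "u \<in> Fn (n1 + n2)" "proj1 n1 u \<in> proj1 n1 ` Z" "proj2 n1 n2 u \<in> proj2 n1 n2 ` Z"
      by (simp_all add: dsum_space_def)
    have "fv.span (insert (proj1 n1 u) (proj1 n1 ` Z)) = fv.span (proj1 n1 ` Z)"
      using u(2) by (intro fv.span_redundant fv.span_base)
    also have "\<dots> = proj1 n1 ` Z"
      using module_hom.subspace_image[OF module_hom_proj1 Zs(2)]
      by (rule fv.span_eq_iff[THEN iffD2])
    moreover have "fv.span (insert (proj2 n1 n2 u) (proj2 n1 n2 ` Z)) = fv.span (proj2 n1 n2 ` Z)"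
      using u(3) by (intro fv.span_redundant fv.span_base)
    moreover have "\<dots> = proj2 n1 n2 ` Z"
      using module_hom.subspace_image[OF module_hom_proj2 Zs(2)]
      by (rule fv.span_eq_iff[THEN iffD2])
    ultimately show "u \<in> Z"
      using dsum_rank_cyclic_flat_less[OF Z u(1)] by (metis less_irrefl)
  qed
qed

lemma qflat_proj1_cyclic_flat:
  assumes Z: "Z \<in> cyclic_flats (n1 + n2) (dsum_rank n1 r1 n2 r2)"
  shows "qflat n1 r1 (proj1 n1 ` Z)"
proof -
  have Zs: "fv.subspace Z"
    using Z by (simp add: cyclic_flats_def qcyclic_def subsp_iff)
  show ?thesis
  proof (rule qflatI[OF subsp_proj1_image[OF Zs]])
    fix x assume x: "x \<in> Fn n1" "x \<notin> proj1 n1 ` Z"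
    have px: "proj1 n1 x = x" "proj2 n1 n2 x = 0"
      using x(1) by (simp_all add: proj1_id proj2_Fn_first)
    have "x \<in> Fn (n1 + n2)"
      using x(1) Fn_mono[of n1 "n1 + n2"] by auto
    moreover have "x \<notin> Z"
      using x(2) px(1) by (metis image_eqI)
    moreover have "fv.span (insert 0 (proj2 n1 n2 ` Z)) = proj2 n1 n2 ` Z"
      using module_hom.subspace_image[OF module_hom_proj2 Zs] by simp
    ultimately have "r1 (proj1 n1 ` Z) + r2 (proj2 n1 n2 ` Z) <
        r1 (fv.span (insert x (proj1 n1 ` Z))) + r2 (proj2 n1 n2 ` Z)"
      using dsum_rank_cyclic_flat_less[OF Z] px by metis
    then show "r1 (proj1 n1 ` Z) < r1 (fv.span (insert x (proj1 n1 ` Z)))"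
      by linarith
  qed
qed

lemma qflat_proj2_cyclic_flat:
  assumes Z: "Z \<in> cyclic_flats (n1 + n2) (dsum_rank n1 r1 n2 r2)"
  shows "qflat n2 r2 (proj2 n1 n2 ` Z)"
proof -
  have Zs: "fv.subspace Z"
    using Z by (simp add: cyclic_flats_def qcyclic_def subsp_iff)
  show ?thesis
  proof (rule qflatI[OF subsp_proj2_image[OF Zs]])
    fix x assume x: "x \<in> Fn n2" "x \<notin> proj2 n1 n2 ` Z"
    have px: "proj1 n1 (shift n1 x) = 0" "proj2 n1 n2 (shift n1 x) = x"
      using x(1) by (simp_all add: proj2_shift)
    have "shift n1 x \<in> Fn (n1 + n2)"
      using x(1) by (rule shift_Fn)
    moreover have "shift n1 x \<notin> Z"
      using x(2) px(2) by (metis image_eqI)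
    moreover have "fv.span (insert 0 (proj1 n1 ` Z)) = proj1 n1 ` Z"
      using module_hom.subspace_image[OF module_hom_proj1 Zs] by simp
    ultimately have "r1 (proj1 n1 ` Z) + r2 (proj2 n1 n2 ` Z) <
        r1 (proj1 n1 ` Z) + r2 (fv.span (insert x (proj2 n1 n2 ` Z)))"
      using dsum_rank_cyclic_flat_less[OF Z] px by metis
    then show "r2 (proj2 n1 n2 ` Z) < r2 (fv.span (insert x (proj2 n1 n2 ` Z)))"
      by linarith
  qed
qed

context
  assumes mono1: "\<And>V W. subsp n1 V \<Longrightarrow> subsp n1 W \<Longrightarrow> V \<subseteq> W \<Longrightarrow> r1 V \<le> r1 W"
    and mono2: "\<And>V W. subsp n2 V \<Longrightarrow> subsp n2 W \<Longrightarrow> V \<subseteq> W \<Longrightarrow> r2 V \<le> r2 W"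
begin

lemma dsum_rank_le_components:
  assumes "subsp n1 W1" "subsp n2 W2"
  shows "dsum_rank n1 r1 n2 r2 (dsum_space n1 n2 W1 W2) \<le> r1 W1 + r2 W2"
proof -
  let ?W = "dsum_space n1 n2 W1 W2"
  have W: "subsp (n1 + n2) ?W"
    using assms by (intro subsp_dsum_space) (simp_all add: subsp_iff)
  then have "fv.subspace ?W"
    by (simp add: subsp_iff)
  then have "r1 (proj1 n1 ` ?W) \<le> r1 W1" "r2 (proj2 n1 n2 ` ?W) \<le> r2 W2"
    using assms subsp_proj1_image subsp_proj2_image
    by (auto intro!: mono1 mono2 simp: dsum_space_def)
  then show ?thesis
    using dsum_rank_le[OF W] by linarith
qed

lemma qcyclic_proj1_cyclic_flat:
  assumes Z: "Z \<in> cyclic_flats (n1 + n2) (dsum_rank n1 r1 n2 r2)"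
  shows "qcyclic n1 r1 (proj1 n1 ` Z)"
proof -
  have cyc: "qcyclic (n1 + n2) (dsum_rank n1 r1 n2 r2) Z" and Zs: "fv.subspace Z"
    using Z by (simp_all add: cyclic_flats_def qcyclic_def subsp_iff)
  have Z1: "subsp n1 (proj1 n1 ` Z)" and Z2: "subsp n2 (proj2 n1 n2 ` Z)"
    using subsp_proj1_image[OF Zs] subsp_proj2_image[OF Zs] .
  have Zeq: "dsum_space n1 n2 (proj1 n1 ` Z) (proj2 n1 n2 ` Z) = Z"
    using cyclic_flat_dsum_rank_eq_dsum_space[OF Z] by simp
  show ?thesis
  proof (rule qcyclicI[OF Z1])
    fix x W1 assume x: "x \<in> proj1 n1 ` Z" and W1: "subsp n1 W1" "W1 \<subseteq> proj1 n1 ` Z"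
      and span: "fv.span (insert x W1) = proj1 n1 ` Z"
    let ?W = "dsum_space n1 n2 W1 (proj2 n1 n2 ` Z)"
    have Ws: "subsp (n1 + n2) ?W"
      using W1(1) Z2 by (intro subsp_dsum_space) (simp_all add: subsp_iff)
    have "?W \<subseteq> Z"
      using W1(2) Zeq by (auto simp: dsum_space_def)
    moreover have "x \<in> Z"
      using subset_dsum_space[OF Z1 Z2] x Zeq by auto
    moreover have "fv.span (insert x ?W) = Z"
      using span_insert_dsum_space_first[OF W1(1) Z2, of x] span Zeq x Z1 by (auto simp: subsp_iff)
    ultimately have "dsum_rank n1 r1 n2 r2 ?W = dsum_rank n1 r1 n2 r2 Z"
      using qcyclicD[OF cyc _ Ws] by blast
    then show "r1 W1 = r1 (proj1 n1 ` Z)"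
      using dsum_rank_le_components[OF W1(1) Z2] dsum_rank_cyclic[OF cyc] mono1[OF W1(1) Z1 W1(2)]
      by linarith
  qed
qed

lemma qcyclic_proj2_cyclic_flat:
  assumes Z: "Z \<in> cyclic_flats (n1 + n2) (dsum_rank n1 r1 n2 r2)"
  shows "qcyclic n2 r2 (proj2 n1 n2 ` Z)"
proof -
  have cyc: "qcyclic (n1 + n2) (dsum_rank n1 r1 n2 r2) Z" and Zs: "fv.subspace Z"
    using Z by (simp_all add: cyclic_flats_def qcyclic_def subsp_iff)
  have Z1: "subsp n1 (proj1 n1 ` Z)" and Z2: "subsp n2 (proj2 n1 n2 ` Z)"
    using subsp_proj1_image[OF Zs] subsp_proj2_image[OF Zs] .
  have Zeq: "dsum_space n1 n2 (proj1 n1 ` Z) (proj2 n1 n2 ` Z) = Z"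
    using cyclic_flat_dsum_rank_eq_dsum_space[OF Z] by simp
  show ?thesis
  proof (rule qcyclicI[OF Z2])
    fix x W2 assume x: "x \<in> proj2 n1 n2 ` Z" and W2: "subsp n2 W2" "W2 \<subseteq> proj2 n1 n2 ` Z"
      and span: "fv.span (insert x W2) = proj2 n1 n2 ` Z"
    let ?W = "dsum_space n1 n2 (proj1 n1 ` Z) W2"
    have Ws: "subsp (n1 + n2) ?W"
      using W2(1) Z1 by (intro subsp_dsum_space) (simp_all add: subsp_iff)
    have "?W \<subseteq> Z"
      using W2(2) Zeq by (auto simp: dsum_space_def)
    moreover have "shift n1 x \<in> Z"
      using subset_dsum_space[OF Z1 Z2] x Zeq by auto
    moreover have "fv.span (insert (shift n1 x) ?W) = Z"
      using span_insert_dsum_space_second[OF Z1 W2(1), of x] span Zeq x Z2 by (auto simp: subsp_iff)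
    ultimately have "dsum_rank n1 r1 n2 r2 ?W = dsum_rank n1 r1 n2 r2 Z"
      using qcyclicD[OF cyc _ Ws] by blast
    then show "r2 W2 = r2 (proj2 n1 n2 ` Z)"
      using dsum_rank_le_components[OF Z1 W2(1)] dsum_rank_cyclic[OF cyc] mono2[OF W2(1) Z2 W2(2)]
      by linarith
  qed
qed

end

end

section \<open>Block diagonal matrices\<close>

lemma sum_lessThan_add_split:
  fixes m n :: nat
  shows "(\<Sum>j<m + n. g j) = (\<Sum>j<m. g j) + (\<Sum>k<n. g (m + k))"
  by (induct n) (simp_all add: add_ac)

lemma mat_app_block_diag:
  "mat_app emb (a1 + a2) (n1 + n2) (block_diag a1 n1 G1 G2) v =
    mat_app emb a1 n1 G1 (proj1 n1 v) + shift a1 (mat_app emb a2 n2 G2 (proj2 n1 n2 v))"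
proof (rule ext)
  fix i
  let ?G = "block_diag a1 n1 G1 G2"
  have "(\<Sum>j<n1. ?G i j * emb (v j)) = (\<Sum>j<n1. (if i < a1 then G1 i j else 0) * emb (proj1 n1 v j))"
    by (rule sum.cong) (auto simp: block_diag_def proj1_def)
  moreover have "(\<Sum>k<n2. ?G i (n1 + k) * emb (v (n1 + k))) =
      (\<Sum>k<n2. (if i < a1 then 0 else G2 (i - a1) k) * emb (proj2 n1 n2 v k))"
    by (rule sum.cong) (auto simp: block_diag_def proj2_def)
  ultimately show "mat_app emb (a1 + a2) (n1 + n2) ?G v i =
      (mat_app emb a1 n1 G1 (proj1 n1 v) + shift a1 (mat_app emb a2 n2 G2 (proj2 n1 n2 v))) i"
    unfolding mat_app_def shift_def plus_fun_apply sum_lessThan_add_split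
    by (cases "i < a1"; cases "i < a1 + a2") auto
qed

locale block_diag_rep =
  fixes emb :: "'a::{field,finite} \<Rightarrow> 'b::field"
    and G1 G2 :: "nat \<Rightarrow> nat \<Rightarrow> 'b"
    and a1 a2 n1 n2 :: nat
  assumes emb: "field_emb emb"
begin

abbreviation "T1 \<equiv> mat_app emb a1 n1 G1"
abbreviation "T2 \<equiv> mat_app emb a2 n2 G2"
abbreviation "TN \<equiv> mat_app emb (a1 + a2) (n1 + n2) (block_diag a1 n1 G1 G2)"
abbreviation "r1 \<equiv> rep_rank emb a1 n1 G1"
abbreviation "r2 \<equiv> rep_rank emb a2 n2 G2"
abbreviation "rN \<equiv> rep_rank emb (a1 + a2) (n1 + n2) (block_diag a1 n1 G1 G2)"

lemma TN_first: "v \<in> Fn n1 \<Longrightarrow> TN v = T1 v"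
  using semilinear_zero[OF semilinear_mat_app[OF emb]]
  by (simp add: mat_app_block_diag proj1_id proj2_Fn_first)

lemma TN_shift: "w \<in> Fn n2 \<Longrightarrow> TN (shift n1 w) = shift a1 (T2 w)"
  using semilinear_zero[OF semilinear_mat_app[OF emb]]
  by (simp add: mat_app_block_diag proj2_shift)

lemma proj1_TN: "proj1 a1 (TN v) = T1 (proj1 n1 v)"
  by (simp add: mat_app_block_diag module_hom.add[OF module_hom_proj1] proj1_id)

lemma proj2_TN: "proj2 a1 a2 (TN v) = T2 (proj2 n1 n2 v)"
  by (simp add: mat_app_block_diag module_hom.add[OF module_hom_proj2] proj2_shift proj2_Fn_first)

lemma rN_first: "V \<subseteq> Fn n1 \<Longrightarrow> rN V = r1 V"
proof -
  assume "V \<subseteq> Fn n1"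
  then have "TN ` V = T1 ` V"
    by (intro image_cong[OF refl] TN_first) blast
  then show ?thesis
    by (simp add: rep_rank_eq_dim)
qed

lemma rN_shift: "V \<subseteq> Fn n2 \<Longrightarrow> rN (shift n1 ` V) = r2 V"
proof -
  assume V: "V \<subseteq> Fn n2"
  then have "TN ` shift n1 ` V = shift a1 ` T2 ` V"
    using TN_shift by (force simp: image_image)
  moreover have "finite (T2 ` V)" "T2 ` V \<subseteq> Fn a2"
    using finite_subset[OF V finite_Fn] by auto
  ultimately show ?thesis
    by (simp add: rep_rank_eq_dim dim_shift)
qed

lemma rN_le_add:
  assumes "finite X"
  shows "rN X \<le> r1 (proj1 n1 ` X) + r2 (proj2 n1 n2 ` X)"
proof -
  let ?A = "T1 ` proj1 n1 ` X" and ?B = "shift a1 ` T2 ` proj2 n1 n2 ` X"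
  have "TN ` X \<subseteq> fv.span (?A \<union> ?B)"
  proof
    fix y assume "y \<in> TN ` X"
    then obtain x where x: "x \<in> X" "y = TN x"
      by blast
    have "T1 (proj1 n1 x) \<in> fv.span (?A \<union> ?B)" "shift a1 (T2 (proj2 n1 n2 x)) \<in> fv.span (?A \<union> ?B)"
      using x(1) by (auto intro: fv.span_base)
    then show "y \<in> fv.span (?A \<union> ?B)"
      using x(2) mat_app_block_diag fv.span_add by metis
  qed
  then have "fv.dim (TN ` X) \<le> fv.dim (?A \<union> ?B)"
    using assms by (intro fv.dim_mono_finite) auto
  also have "\<dots> \<le> fv.dim ?A + fv.dim ?B"
    using assms by (intro fv.dim_Un_le_finite) auto
  also have "fv.dim ?B = fv.dim (T2 ` proj2 n1 n2 ` X)"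
    using assms by (intro dim_shift[where m = a2]) auto
  finally show ?thesis
    by (simp add: rep_rank_eq_dim)
qed

lemma qflat_dsum_space:
  assumes F1: "qflat n1 r1 F1" and F2: "qflat n2 r2 F2"
  shows "qflat (n1 + n2) rN (dsum_space n1 n2 F1 F2)"
proof -
  let ?F = "dsum_space n1 n2 F1 F2"
  have flat1: "subsp n1 F1" "\<And>y. y \<in> Fn n1 \<Longrightarrow> T1 y \<in> fv.span (T1 ` F1) \<Longrightarrow> y \<in> F1"
    using F1 qflat_rep_rank_iff[OF emb] by blast+
  have flat2: "subsp n2 F2" "\<And>y. y \<in> Fn n2 \<Longrightarrow> T2 y \<in> fv.span (T2 ` F2) \<Longrightarrow> y \<in> F2"
    using F2 qflat_rep_rank_iff[OF emb] by blast+
  have "x \<in> ?F" if x: "x \<in> Fn (n1 + n2)" "TN x \<in> fv.span (TN ` ?F)" for x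
  proof -
    have "T1 (proj1 n1 x) \<in> fv.span (T1 ` F1)"
      using image_in_span_transfer[where f = TN and p = "proj1 n1",
          OF module_hom_proj1 proj1_TN _ x(2)]
      by (auto simp: dsum_space_def)
    moreover have "T2 (proj2 n1 n2 x) \<in> fv.span (T2 ` F2)"
      using image_in_span_transfer[where f = TN and p = "proj2 n1 n2",
          OF module_hom_proj2 proj2_TN _ x(2)]
      by (auto simp: dsum_space_def)
    ultimately show ?thesis
      using x(1) flat1(2) flat2(2) by (simp add: dsum_space_def)
  qed
  moreover have "subsp (n1 + n2) ?F"
    using flat1(1) flat2(1) by (intro subsp_dsum_space) (simp_all add: subsp_iff)
  ultimately show ?thesis
    using qflat_rep_rank_iff[OF emb] by blast
qed

lemma qopen_dsum_space:
  assumes O1: "qopen n1 r1 O1" and O2: "qopen n2 r2 O2"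
  shows "qopen (n1 + n2) rN (dsum_space n1 n2 O1 O2)"
proof -
  obtain S1 where S1: "\<forall>C \<in> S1. qcircuit n1 r1 C" "O1 = fv.span (\<Union>S1)"
    using O1 by (auto simp: qopen_def fspan_eq)
  obtain S2 where S2: "\<forall>C \<in> S2. qcircuit n2 r2 C" "O2 = fv.span (\<Union>S2)"
    using O2 by (auto simp: qopen_def fspan_eq)
  let ?S = "S1 \<union> (\<lambda>C. shift n1 ` C) ` S2"
  have "qcircuit (n1 + n2) rN C" if "C \<in> S1" for C
    using qcircuit_image[where m = n1 and n = "n1 + n2" and rho = r1 and rho' = rN,
        OF module_hom_id module_hom_proj1[of n1]] S1(1) that
    using Fn_mono[of n1 "n1 + n2"] by (simp add: proj1_id rN_first subset_iff) blast
  moreover have "qcircuit (n1 + n2) rN (shift n1 ` C)" if "C \<in> S2" for C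
    using qcircuit_image[where m = n2 and n = "n1 + n2" and rho = r2 and rho' = rN,
        OF module_hom_shift[of n1] module_hom_proj2[of n1 n2]] S2(1) that
    by (simp add: proj2_shift shift_Fn rN_shift)
  ultimately have "\<forall>C \<in> ?S. qcircuit (n1 + n2) rN C"
    by blast
  moreover have "\<Union>S1 \<subseteq> Fn n1" "\<Union>S2 \<subseteq> Fn n2"
    using S1(1) S2(1) by (auto simp: qcircuit_def subsp_iff)
  then have "dsum_space n1 n2 O1 O2 = fv.span (\<Union>S1 \<union> shift n1 ` \<Union>S2)"
    unfolding S1(2) S2(2) by (rule dsum_space_span)
  moreover have "\<Union>S1 \<union> shift n1 ` \<Union>S2 = \<Union>?S"
    by auto
  ultimately show ?thesis
    unfolding qopen_def fspan_eq by metis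
qed

lemma qindep_dsum_rank:
  assumes V: "qindep (n1 + n2) rN V"
  shows "qindep (n1 + n2) (dsum_rank n1 r1 n2 r2) V"
proof (rule qindep_dsum_rankI)
  show "subsp (n1 + n2) V"
    using V by (simp add: qindep_def)
  show "r1 {0} = 0" "r2 {0} = 0"
    using rep_rank_zero[OF emb] by blast+
  fix X assume X: "subsp (n1 + n2) X" "X \<subseteq> V"
  then have "fv.dim X = rN X"
    using qindep_rep_rank_subspace[OF emb V] by (simp add: qindep_def fdim_eq)
  also have "\<dots> \<le> r1 (proj1 n1 ` X) + r2 (proj2 n1 n2 ` X)"
    using X(1) finite_subsp by (intro rN_le_add) blast
  finally show "fv.dim X \<le> r1 (proj1 n1 ` X) + r2 (proj2 n1 n2 ` X)" .
qed

lemma TN_dsum_space_subset_span: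
  assumes "T1 ` Z1 \<subseteq> fv.span (T1 ` W1)" "W1 \<subseteq> Fn n1"
    and "T2 ` Z2 \<subseteq> fv.span (T2 ` W2)" "W2 \<subseteq> Fn n2"
  shows "TN ` dsum_space n1 n2 Z1 Z2 \<subseteq> fv.span (TN ` (W1 \<union> shift n1 ` W2))"
proof
  fix y assume "y \<in> TN ` dsum_space n1 n2 Z1 Z2"
  then obtain z where "z \<in> dsum_space n1 n2 Z1 Z2" and y: "y = TN z"
    by blast
  then have z: "proj1 n1 z \<in> Z1" "proj2 n1 n2 z \<in> Z2"
    by (simp_all add: dsum_space_def)
  have "TN ` W1 = T1 ` W1"
    using assms(2) by (intro image_cong[OF refl] TN_first) blast
  moreover have "T1 (proj1 n1 z) \<in> fv.span (T1 ` W1)"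
    using subsetD[OF assms(1) imageI[OF z(1)]] .
  ultimately have "T1 (proj1 n1 z) \<in> fv.span (TN ` W1)"
    by simp
  also have "\<dots> \<subseteq> fv.span (TN ` (W1 \<union> shift n1 ` W2))"
    by (intro fv.span_mono image_mono) blast
  finally have first: "T1 (proj1 n1 z) \<in> fv.span (TN ` (W1 \<union> shift n1 ` W2))" .
  have "shift a1 (T2 (proj2 n1 n2 z)) \<in> shift a1 ` fv.span (T2 ` W2)"
    using subsetD[OF assms(3) imageI[OF z(2)]] by (rule imageI)
  also have "\<dots> = fv.span (shift a1 ` T2 ` W2)"
    by (rule module_hom.span_image[OF module_hom_shift, symmetric])
  also have "shift a1 ` T2 ` W2 = TN ` shift n1 ` W2"
    unfolding image_image using assms(4) by (intro image_cong[OF refl] TN_shift[symmetric]) blast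
  also have "fv.span (TN ` shift n1 ` W2) \<subseteq> fv.span (TN ` (W1 \<union> shift n1 ` W2))"
    by (intro fv.span_mono image_mono) blast
  finally have second: "shift a1 (T2 (proj2 n1 n2 z)) \<in> fv.span (TN ` (W1 \<union> shift n1 ` W2))" .
  have "y = T1 (proj1 n1 z) + shift a1 (T2 (proj2 n1 n2 z))"
    by (simp only: y mat_app_block_diag)
  then show "y \<in> fv.span (TN ` (W1 \<union> shift n1 ` W2))"
    using fv.span_add[OF first second] by (simp only:)
qed

lemma qcyclic_dsum_space:
  assumes Z1: "qcyclic n1 r1 Z1" and Z2: "qcyclic n2 r2 Z2"
  shows "qcyclic (n1 + n2) rN (dsum_space n1 n2 Z1 Z2)"
proof -
  let ?Z = "dsum_space n1 n2 Z1 Z2"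
  have Z1s: "subsp n1 Z1" and Z2s: "subsp n2 Z2"
    using Z1 Z2 by (simp_all add: qcyclic_def)
  have Zs: "subsp (n1 + n2) ?Z"
    using Z1s Z2s by (intro subsp_dsum_space) (simp_all add: subsp_iff)
  show ?thesis
  proof (rule qcyclicI[OF Zs])
    fix x W assume x: "x \<in> ?Z" and W: "subsp (n1 + n2) W" "W \<subseteq> ?Z"
      and span: "fv.span (insert x W) = ?Z"
    let ?W1 = "{z \<in> Z1. z \<in> W}" and ?W2 = "{z \<in> Z2. shift n1 z \<in> W}"
    have Ws: "fv.subspace W"
      using W(1) by (simp add: subsp_iff)
    have in_span: "Z1 \<union> shift n1 ` Z2 \<subseteq> fv.span (insert x W)"
      using subset_dsum_space[OF Z1s Z2s] span by simp
    have "T1 ` Z1 \<subseteq> fv.span (T1 ` ?W1)"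
      using rep_rank_cyclic_subset_span_preimage[OF emb Z1 module_hom_id Ws] in_span by blast
    moreover have "T2 ` Z2 \<subseteq> fv.span (T2 ` ?W2)"
      using rep_rank_cyclic_subset_span_preimage[OF emb Z2 module_hom_shift Ws] in_span by blast
    moreover have "?W1 \<subseteq> Fn n1" "?W2 \<subseteq> Fn n2"
      using Z1s Z2s by (auto simp: subsp_iff)
    ultimately have "TN ` ?Z \<subseteq> fv.span (TN ` (?W1 \<union> shift n1 ` ?W2))"
      by (intro TN_dsum_space_subset_span)
    also have "\<dots> \<subseteq> fv.span (TN ` W)"
      by (intro fv.span_mono image_mono) blast
    finally show "rN W = rN ?Z"
      using rep_rank_eq_iff_subset_span[OF finite_subsp[OF Zs] W(2)] by blast
  qed
qed

lemma cyclic_flats_dsum_rank_subset: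
  "cyclic_flats (n1 + n2) (dsum_rank n1 r1 n2 r2) \<subseteq> cyclic_flats (n1 + n2) rN"
proof
  fix Z assume Z: "Z \<in> cyclic_flats (n1 + n2) (dsum_rank n1 r1 n2 r2)"
  have mono1: "r1 V \<le> r1 W" if "subsp n1 V" "subsp n1 W" "V \<subseteq> W" for V W
    using that finite_subsp rep_rank_mono by blast
  have mono2: "r2 V \<le> r2 W" if "subsp n2 V" "subsp n2 W" "V \<subseteq> W" for V W
    using that finite_subsp rep_rank_mono by blast
  have "qflat (n1 + n2) rN (dsum_space n1 n2 (proj1 n1 ` Z) (proj2 n1 n2 ` Z))"
    using qflat_dsum_space qflat_proj1_cyclic_flat[OF Z] qflat_proj2_cyclic_flat[OF Z] by blast
  moreover have "qcyclic (n1 + n2) rN (dsum_space n1 n2 (proj1 n1 ` Z) (proj2 n1 n2 ` Z))"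
    using qcyclic_dsum_space qcyclic_proj1_cyclic_flat[OF mono1 mono2 Z]
      qcyclic_proj2_cyclic_flat[OF mono1 mono2 Z] by blast
  ultimately show "Z \<in> cyclic_flats (n1 + n2) rN"
    using cyclic_flat_dsum_rank_eq_dsum_space[OF Z] by (simp add: cyclic_flats_def)
qed

end

theorem theorem6p6:
  fixes emb :: "'a::{field,finite} \<Rightarrow> 'b::{field,finite}"
    and G1 G2 :: "nat \<Rightarrow> nat \<Rightarrow> 'b"
    and a1 a2 n1 n2 :: nat
  assumes emb: "field_emb emb"
    and G1: "mat_rank a1 n1 G1 = a1"
    and G2: "mat_rank a2 n2 G2 = a2"
  defines "rho1 \<equiv> rep_rank emb a1 n1 G1"
    and "rho2 \<equiv> rep_rank emb a2 n2 G2"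
    and "rhoN \<equiv> rep_rank emb (a1 + a2) (n1 + n2) (block_diag a1 n1 G1 G2)"
  shows
    "(\<forall>F1 F2. qflat n1 rho1 F1 \<and> qflat n2 rho2 F2 \<longrightarrow>
        qflat (n1 + n2) rhoN (dsum_space n1 n2 F1 F2))
   \<and> (\<forall>O1 O2. qopen n1 rho1 O1 \<and> qopen n2 rho2 O2 \<longrightarrow>
        qopen (n1 + n2) rhoN (dsum_space n1 n2 O1 O2))
   \<and> cyclic_flats (n1 + n2) (dsum_rank n1 rho1 n2 rho2) \<subseteq> cyclic_flats (n1 + n2) rhoN
   \<and> (\<forall>V. qindep (n1 + n2) rhoN V \<longrightarrow> qindep (n1 + n2) (dsum_rank n1 rho1 n2 rho2) V)"
proof -
  interpret block_diag_rep emb G1 G2 a1 a2 n1 n2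
    using emb by unfold_locales
  show ?thesis
    unfolding rho1_def rho2_def rhoN_def
    using qflat_dsum_space qopen_dsum_space cyclic_flats_dsum_rank_subset qindep_dsum_rank by blast
qed

end
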